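(* Let $T$ be a standard Borel space, $X$ a random finite or countable subset of $T$, and $\mathcal A$ an algebra of Borel subsets of $T$ that generates the Borel $\sigma$-field of $T$. Assume that: - $X$ satisfies the independence condition on $\mathcal A$; - $\Pr(t\in X)=0$ for every $t\in T$. Then $X$ is a Poisson process in the sense of Kingman.
   Context: Random finite or countable sets. A random finite or countable subset of $T$ on a standard probability space $\Omega$ is given by random variables $N:\Omega\to\{0,1,2,\dots\}\cup\{\infty\}$ and $X_1,X_2,\dots:\Omega\to T$. It is $X(\omega)=\{X_1(\omega),\dots,X_{N(\omega)}(\omega)\}$, meaning $\{X_1(\omega),X_2(\omega),\dots\}$ if $N(\omega)=\infty$ and $\emptyset$ if $N(\omega)=0$. Independence of fragments. For Borel $B\subset T$, the fragment $B\cap X$ is again such a random set. Fragments $B_1\cap X,\dots,B_n\cap X$ are independent if there exist, on $\Omega$, independent random elements $Z_1,\dots,Z_n$, each of the form $Z_i=(N_i,(X_{i,j})_{j\ge1})$ with $N_i\in\{0,1,\dots,\infty\}$ and $X_{i,j}\in T$, such that a.s. $B_i\cap X=\{X_{i,1},\dots,X_{i,N_i}\}$ for each $i$. Independence condition on $\mathcal A$. $X$ satisfies it if for every $n\ge2$ and every pairwise disjoint $B_1,\dots,B_n\in\mathcal A$ the fragments $B_1\cap X,\dots,B_n\cap X$ are independent. Kingman Poisson process. For Borel $B\subset T$ let $\xi_B(\omega)\in\{0,1,2,\dots,\infty\}$ be the number of points of $B\cap X(\omega)$. $X$ is a Poisson process in the sense of Kingman if: - each $\xi_B$ is measurable; -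 for pairwise disjoint Borel $B_1,\dots,B_n$ the variables $\xi_{B_1},\dots,\xi_{B_n}$ are independent; - each $\xi_B$ has the Poisson distribution with some parameter $\mu(B)\in[0,\infty]$, where $\mu(B)=0$ means $\xi_B=0$ a.s. and $\mu(B)=\infty$ means $\xi_B=\infty$ a.s. *)

theory Defs
  imports "HOL-Probability.Probability"
begin

definition standard_prob_space :: "('w::polish_space) measure \<Rightarrow> bool" where
  "standard_prob_space M \<longleftrightarrow>
     (\<exists>M0. sets M0 = sets (borel :: 'w measure) \<and> prob_space M0 \<and>
           (M = M0 \<or> M = completion M0))"

text \<open>A random finite or countable subset of T, given by N and X_1, X_2, ...
  (the index 0 of the sequence is unused).\<close>
definition random_countable_set ::
    "'w measure \<Rightarrow> ('w \<Rightarrow> enat) \<Rightarrow> (nat \<Rightarrow> 'w \<Rightarrow> 't::topological_space) \<Rightarrow> bool" where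
  "random_countable_set M N X \<longleftrightarrow>
     N \<in> measurable M (count_space UNIV) \<and> (\<forall>j. X j \<in> measurable M borel)"

definition rset :: "('w \<Rightarrow> enat) \<Rightarrow> (nat \<Rightarrow> 'w \<Rightarrow> 't) \<Rightarrow> 'w \<Rightarrow> 't set" where
  "rset N X \<omega> = {X j \<omega> | j. 1 \<le> j \<and> enat j \<le> N \<omega>}"

definition elem_space :: "(enat \<times> (nat \<Rightarrow> 't::topological_space)) measure" where
  "elem_space = count_space UNIV \<Otimes>\<^sub>M (\<Pi>\<^sub>M j\<in>UNIV. borel)"

definition indep_fragments ::
    "'w measure \<Rightarrow> ('w \<Rightarrow> enat) \<Rightarrow> (nat \<Rightarrow> 'w \<Rightarrow> 't::topological_space)
       \<Rightarrow> nat \<Rightarrow> (nat \<Rightarrow> 't set) \<Rightarrow> bool" where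
  "indep_fragments M N X n B \<longleftrightarrow>
     (\<exists>(N' :: nat \<Rightarrow> 'w \<Rightarrow> enat) (X' :: nat \<Rightarrow> nat \<Rightarrow> 'w \<Rightarrow> 't).
        prob_space.indep_vars M (\<lambda>i. elem_space) (\<lambda>i \<omega>. (N' i \<omega>, \<lambda>j. X' i j \<omega>)) {..<n} \<and>
        (\<forall>i<n. AE \<omega> in M. B i \<inter> rset N X \<omega> = rset (N' i) (X' i) \<omega>))"

definition independence_condition ::
    "'w measure \<Rightarrow> ('w \<Rightarrow> enat) \<Rightarrow> (nat \<Rightarrow> 'w \<Rightarrow> 't::topological_space) \<Rightarrow> 't set set \<Rightarrow> bool" where
  "independence_condition M N X \<A> \<longleftrightarrow>
     (\<forall>n B. n \<ge> 2 \<longrightarrow> (\<forall>i<n. B i \<in> \<A>) \<longrightarrow> disjoint_family_on B {..<n} \<longrightarrow>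
        indep_fragments M N X n B)"

definition pcount :: "('w \<Rightarrow> enat) \<Rightarrow> (nat \<Rightarrow> 'w \<Rightarrow> 't) \<Rightarrow> 't set \<Rightarrow> 'w \<Rightarrow> enat" where
  "pcount N X B \<omega> = (if finite (B \<inter> rset N X \<omega>) then enat (card (B \<inter> rset N X \<omega>)) else \<infinity>)"

text \<open>\<xi> has the Poisson distribution with parameter \<mu> \<in> [0,\<infinity>]
  (\<mu> = \<infinity> meaning \<xi> = \<infinity> a.s.; \<mu> = 0 gives \<xi> = 0 a.s.).\<close>
definition poisson_enat :: "'w measure \<Rightarrow> ('w \<Rightarrow> enat) \<Rightarrow> ennreal \<Rightarrow> bool" where
  "poisson_enat M \<xi> \<mu> \<longleftrightarrow>
     (\<mu> = \<infinity> \<longrightarrow> (AE \<omega> in M. \<xi> \<omega> = \<infinity>)) \<and>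
     (\<mu> \<noteq> \<infinity> \<longrightarrow> (\<forall>k::nat. measure M {\<omega> \<in> space M. \<xi> \<omega> = enat k}
                         = exp (- enn2real \<mu>) * enn2real \<mu> ^ k / fact k))"

definition kingman_poisson ::
    "'w measure \<Rightarrow> ('w \<Rightarrow> enat) \<Rightarrow> (nat \<Rightarrow> 'w \<Rightarrow> 't::topological_space) \<Rightarrow> bool" where
  "kingman_poisson M N X \<longleftrightarrow>
     (\<forall>B \<in> sets borel. pcount N X B \<in> measurable M (count_space UNIV)) \<and>
     (\<forall>n (B :: nat \<Rightarrow> 't set). (\<forall>i<n. B i \<in> sets borel) \<longrightarrow> disjoint_family_on B {..<n} \<longrightarrow>
        prob_space.indep_vars M (\<lambda>i. count_space UNIV) (\<lambda>i. pcount N X (B i)) {..<n}) \<and>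
     (\<forall>B \<in> sets borel. \<exists>\<mu>. poisson_enat M (pcount N X B) \<mu>)"

end

theory Submission
  imports Defs
begin

text \<open>Write \<open>z D\<close> (\<open>void_prob D\<close> below) for the probability that \<open>X\<close> avoids \<open>D\<close>. The independence
  condition makes \<open>z\<close> multiplicative over sets lying in disjoint members of \<open>\<A>\<close>. Since \<open>\<A>\<close> generates
  the Borel sets of a second countable space, there is a dissecting system: nested finite partitions
  of \<open>T\<close> into members of \<open>\<A>\<close> that eventually separate any two points. The number of level-\<open>n\<close> cells
  meeting \<open>X \<inter> C\<close> increases to the number of points of \<open>X \<inter> C\<close>, and its generating function is the
  product of \<open>s + (1 - s) z (C \<inter> Q)\<close> over the level-\<open>n\<close> cells \<open>Q\<close>.

  Either at every level some cell has \<open>z (C \<inter> Q) \<le> 1 - \<epsilon>\<close>: by Koenig's lemma these cells can be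
  chosen nested; they shrink to at most one point, which is a.s. not in \<open>X\<close>, and this forces
  \<open>z (C \<inter> Q) = 0\<close> along the chain, so \<open>X \<inter> C\<close> is a.s. infinite. Or the cells become uniformly light,
  and the product tends to \<open>z C powr (1 - s)\<close>, the generating function of the Poisson law with mean
  \<open>- ln (z C)\<close>. In both cases \<open>z D = exp (- E count\<^sub>D)\<close>; the means are additive, so \<open>z\<close> is
  multiplicative over all disjoint Borel sets, and a \<open>\<pi>\<close>-\<open>\<lambda>\<close> argument on the void events yields the
  independence of the counts.\<close>

lemma multiplicative_UN:
  fixes f :: "'a set \<Rightarrow> 'b::comm_monoid_mult"
  assumes "finite I" and "f {} = 1"
    and mult: "\<And>i J. finite J \<Longrightarrow> J \<subseteq> I \<Longrightarrow> i \<in> I \<Longrightarrow> i \<notin> J \<Longrightarrow>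
                 f (D i \<union> (\<Union>j\<in>J. D j)) = f (D i) * f (\<Union>j\<in>J. D j)"
  shows "f (\<Union>i\<in>I. D i) = (\<Prod>i\<in>I. f (D i))"
  using \<open>finite I\<close> subset_refl
proof (induction I rule: finite_subset_induct')
  case (insert i J)
  then show ?case by (simp add: mult)
qed (simp add: \<open>f {} = 1\<close>)

lemma finite_Int_decseq_Inter:
  assumes "finite Y" and "decseq Q" and meet: "\<And>n. Y \<inter> Q n \<noteq> {}"
  shows "Y \<inter> (\<Inter>n. Q n) \<noteq> {}"
proof
  assume none: "Y \<inter> (\<Inter>n. Q n) = {}"
  have "\<exists>k. y \<notin> Q k" if "y \<in> Y" for y using none that by blast
  then obtain k where k: "\<And>y. y \<in> Y \<Longrightarrow> y \<notin> Q (k y)" by metis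
  define K where "K = Max (k ` Y)"
  have "y \<notin> Q K" if "y \<in> Y" for y
  proof
    assume "y \<in> Q K"
    have "k y \<le> K" unfolding K_def using \<open>finite Y\<close> that by (intro Max_ge) auto
    then have "Q K \<subseteq> Q (k y)" using \<open>decseq Q\<close> by (simp add: decseq_def)
    then show False using k[OF that] \<open>y \<in> Q K\<close> by blast
  qed
  then show False using meet[of K] by blast
qed

lemma sigma_sets_countable_subfamily:
  assumes "A \<in> sigma_sets \<Omega> S"
  shows "\<exists>S'\<subseteq>S. countable S' \<and> A \<in> sigma_sets \<Omega> S'"
  using assms
proof induct
  case (Basic a)
  then show ?case by (intro exI[of _ "{a}"]) auto
next
  case Empty
  show ?case by (intro exI[of _ "{}"]) (auto intro: sigma_sets.Empty)
next
  case (Compl a)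
  then show ?case by (auto intro: sigma_sets.Compl)
next
  case (Union a)
  then obtain S' where S': "\<And>i. S' i \<subseteq> S \<and> countable (S' i) \<and> a i \<in> sigma_sets \<Omega> (S' i)"
    by metis
  then have "a i \<in> sigma_sets \<Omega> (\<Union>i. S' i)" for i
    using sigma_sets_subseteq[of "S' i" "\<Union>i. S' i" \<Omega>] by blast
  then show ?case
    using S' by (intro exI[of _ "\<Union>i. S' i"]) (auto intro: sigma_sets.Union)
qed

lemma sigma_sets_mem_cong:
  assumes "A \<in> sigma_sets UNIV S" and "\<And>B. B \<in> S \<Longrightarrow> s \<in> B \<longleftrightarrow> t \<in> B"
  shows "s \<in> A \<longleftrightarrow> t \<in> A"
  using assms by induct auto

lemma ex_separating_seq:
  fixes \<A> :: "'t::{second_countable_topology, t1_space} set set"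
  assumes "\<A> \<noteq> {}" and gen: "sigma_sets UNIV \<A> = sets borel"
  shows "\<exists>G :: nat \<Rightarrow> 't set. range G \<subseteq> \<A> \<and> (\<forall>s t. s \<noteq> t \<longrightarrow> (\<exists>i. (s \<in> G i) \<noteq> (t \<in> G i)))"
proof -
  obtain \<B> :: "'t set set" where "countable \<B>" and basis: "topological_basis \<B>"
    using ex_countable_basis by blast
  have "\<exists>S'\<subseteq>\<A>. countable S' \<and> b \<in> sigma_sets UNIV S'" if "b \<in> \<B>" for b
    using that basis gen by (intro sigma_sets_countable_subfamily) (auto simp: topological_basis_open)
  then obtain S' where S': "\<And>b. b \<in> \<B> \<Longrightarrow> S' b \<subseteq> \<A> \<and> countable (S' b) \<and> b \<in> sigma_sets UNIV (S' b)"
    by metis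
  obtain a where "a \<in> \<A>" using \<open>\<A> \<noteq> {}\<close> by blast
  define C where "C = insert a (\<Union>b\<in>\<B>. S' b)"
  have "countable C" "C \<noteq> {}"
    unfolding C_def using \<open>countable \<B>\<close> S' by auto
  then have range_G: "range (from_nat_into C) = C" by simp
  show ?thesis
  proof (rule exI[of _ "from_nat_into C"], intro conjI allI impI)
    have "C \<subseteq> \<A>" unfolding C_def using S' \<open>a \<in> \<A>\<close> by auto
    then show "range (from_nat_into C) \<subseteq> \<A>" by (simp add: range_G)
    fix s t :: 't assume "s \<noteq> t"
    then obtain U where "open U" "s \<in> U" "t \<notin> U" by (metis separation_t1)
    then obtain b where b: "b \<in> \<B>" "s \<in> b" "b \<subseteq> U" using topological_basisE[OF basis] by blast
    have "b \<in> sigma_sets UNIV C"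
      using S'[OF b(1)] sigma_sets_subseteq[of "S' b" C] b(1) unfolding C_def by blast
    show "\<exists>i. (s \<in> from_nat_into C i) \<noteq> (t \<in> from_nat_into C i)"
    proof (rule ccontr)
      assume "\<not> ?thesis"
      then have "s \<in> B \<longleftrightarrow> t \<in> B" if "B \<in> C" for B
        using that range_G by (metis rangeE)
      then have "s \<in> b \<longleftrightarrow> t \<in> b" by (intro sigma_sets_mem_cong[OF \<open>b \<in> sigma_sets UNIV C\<close>])
      then show False using b \<open>t \<notin> U\<close> by blast
    qed
  qed
qed

lemma powser_eq_0_imp_coeff_0:
  fixes d :: "nat \<Rightarrow> real"
  assumes bounded: "\<And>k. \<bar>d k\<bar> \<le> B" and zero: "\<And>s. 0 < s \<Longrightarrow> s < 1 \<Longrightarrow> (\<lambda>k. d k * s ^ k) sums 0"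
  shows "d 0 = 0"
proof -
  define f where "f x = (\<Sum>k. d k * x ^ k)" for x :: real
  have "summable (\<lambda>k. d k * x ^ k)" if "norm x < 1" for x :: real
  proof (rule summable_comparison_test')
    show "summable (\<lambda>k. B * \<bar>x\<bar> ^ k)" using that by (intro summable_mult summable_geometric) simp
    show "norm (d k * x ^ k) \<le> B * \<bar>x\<bar> ^ k" for k
      using bounded[of k] by (simp add: abs_mult power_abs mult_right_mono)
  qed
  then have "(f \<longlongrightarrow> d 0) (at 0)"
    unfolding f_def by (intro powser_limit_0[of 1]) (auto simp: summable_sums)
  then have "(f \<longlongrightarrow> d 0) (at_right 0)"
    by (rule tendsto_mono[OF at_le, rotated]) simp
  moreover have "eventually (\<lambda>x. f x = 0) (at_right 0)"
    by (rule eventually_at_rightI[of _ 1]) (auto simp: f_def zero sums_unique[symmetric])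
  then have "(f \<longlongrightarrow> 0) (at_right 0)" by (rule tendsto_eventually)
  ultimately show ?thesis by (rule tendsto_unique[OF trivial_limit_at_right_real])
qed

lemma powser_eq_0_imp_coeffs_0:
  fixes d :: "nat \<Rightarrow> real"
  assumes "\<And>k. \<bar>d k\<bar> \<le> B" and "\<And>s. 0 < s \<Longrightarrow> s < 1 \<Longrightarrow> (\<lambda>k. d k * s ^ k) sums 0"
  shows "d k = 0"
  using assms
proof (induction k arbitrary: d)
  case 0
  then show ?case by (rule powser_eq_0_imp_coeff_0)
next
  case (Suc k)
  have "d 0 = 0" using Suc.prems by (rule powser_eq_0_imp_coeff_0)
  have "(\<lambda>i. d (Suc i) * s ^ i) sums 0" if s: "0 < s" "s < 1" for s
  proof -
    have "(\<lambda>i. d (Suc i) * s ^ Suc i) sums 0"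
      using Suc.prems(2)[OF s] \<open>d 0 = 0\<close> by (subst sums_Suc_iff) simp
    then have "(\<lambda>i. d (Suc i) * s ^ Suc i / s) sums (0 / s)" by (rule sums_divide)
    then show ?thesis using s by simp
  qed
  then show ?case using Suc.prems(1) by (intro Suc.IH) auto
qed

lemma abs_ln_one_minus_mult_le:
  fixes p t :: real
  assumes "0 \<le> p" "p \<le> 1/2" "0 \<le> t" "t \<le> 1"
  shows "\<bar>ln (1 - p * t) - t * ln (1 - p)\<bar> \<le> 2 * p\<^sup>2"
proof -
  have "p * t \<le> p" using mult_left_mono[of t 1 p] assms by simp
  then have pt: "0 \<le> p * t" "p * t \<le> 1/2" "(p * t)\<^sup>2 \<le> p\<^sup>2"
    using assms by (auto intro: power_mono)
  have "- (p * t) - 2 * (p * t)\<^sup>2 \<le> ln (1 - p * t)" "ln (1 - p * t) \<le> - (p * t)"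
    using ln_one_minus_pos_lower_bound[of "p * t"] ln_one_minus_pos_upper_bound[of "p * t"] pt
    by simp_all
  moreover have "t * (- p - 2 * p\<^sup>2) \<le> t * ln (1 - p)" "t * ln (1 - p) \<le> t * - p"
    using mult_left_mono[OF ln_one_minus_pos_lower_bound[of p], of t]
      mult_left_mono[OF ln_one_minus_pos_upper_bound[of p], of t] assms
    by simp_all
  moreover have "t * p\<^sup>2 \<le> p\<^sup>2" using assms by (simp add: mult_left_le_one_le)
  ultimately show ?thesis using pt by (simp add: abs_le_iff algebra_simps)
qed

lemma abs_sum_ln_one_minus_mult_le:
  fixes p :: "'a \<Rightarrow> real"
  assumes p: "\<And>i. i \<in> I \<Longrightarrow> 0 \<le> p i \<and> p i < \<epsilon>" and "\<epsilon> \<le> 1/2" and t: "0 \<le> t" "t \<le> 1"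
  shows "\<bar>(\<Sum>i\<in>I. ln (1 - t * p i)) - t * (\<Sum>i\<in>I. ln (1 - p i))\<bar> \<le> 2 * \<epsilon> * - (\<Sum>i\<in>I. ln (1 - p i))"
proof -
  have bound: "\<bar>ln (1 - t * p i) - t * ln (1 - p i)\<bar> \<le> 2 * \<epsilon> * - ln (1 - p i)" if "i \<in> I" for i
  proof -
    have "\<bar>ln (1 - p i * t) - t * ln (1 - p i)\<bar> \<le> 2 * (p i)\<^sup>2"
      using p[OF that] assms(2) t by (intro abs_ln_one_minus_mult_le) auto
    then have "\<bar>ln (1 - t * p i) - t * ln (1 - p i)\<bar> \<le> 2 * (p i)\<^sup>2"
      by (simp add: mult.commute)
    also have "\<dots> \<le> 2 * (\<epsilon> * p i)"
      using mult_right_mono[of "p i" \<epsilon> "p i"] p[OF that] by (simp add: power2_eq_square)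
    also have "\<dots> \<le> 2 * (\<epsilon> * - ln (1 - p i))"
      using mult_left_mono[OF ln_one_minus_pos_upper_bound[of "p i"], of \<epsilon>] p[OF that] assms(2)
      by simp
    finally show ?thesis by simp
  qed
  have "(\<Sum>i\<in>I. ln (1 - t * p i)) - t * (\<Sum>i\<in>I. ln (1 - p i)) =
      (\<Sum>i\<in>I. ln (1 - t * p i) - t * ln (1 - p i))"
    by (simp add: sum_subtractf sum_distrib_left)
  then have "\<bar>(\<Sum>i\<in>I. ln (1 - t * p i)) - t * (\<Sum>i\<in>I. ln (1 - p i))\<bar> \<le>
      (\<Sum>i\<in>I. \<bar>ln (1 - t * p i) - t * ln (1 - p i)\<bar>)"
    by (simp only: sum_abs)
  also have "\<dots> \<le> (\<Sum>i\<in>I. 2 * \<epsilon> * - ln (1 - p i))"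
    using bound by (rule sum_mono)
  also have "\<dots> = 2 * \<epsilon> * - (\<Sum>i\<in>I. ln (1 - p i))"
    by (simp add: sum_distrib_left[symmetric] sum_negf)
  finally show ?thesis .
qed

text \<open>A product of factors \<open>1 - p\<^sub>i\<close> with uniformly small \<open>p\<^sub>i\<close> behaves like \<open>exp (- \<Sum>p\<^sub>i)\<close>,
  so damping every \<open>p\<^sub>i\<close> by the factor \<open>t\<close> raises the product to the power \<open>t\<close>.\<close>
lemma tendsto_prod_one_minus_mult:
  fixes p :: "nat \<Rightarrow> 'a \<Rightarrow> real"
  assumes fin: "\<And>n. finite (I n)" and p: "\<And>n i. i \<in> I n \<Longrightarrow> 0 \<le> p n i \<and> p n i < 1"
    and prod: "\<And>n. (\<Prod>i\<in>I n. 1 - p n i) = q"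
    and small: "\<And>\<epsilon>. 0 < \<epsilon> \<Longrightarrow> \<forall>\<^sub>F n in sequentially. \<forall>i\<in>I n. p n i < \<epsilon>"
    and t: "0 \<le> t" "t \<le> 1"
  shows "(\<lambda>n. \<Prod>i\<in>I n. 1 - t * p n i) \<longlonglongrightarrow> q powr t"
proof -
  have "0 < q" using prod[of 0] p fin by (auto intro!: prod_pos)
  define \<rho> where "\<rho> = - ln q"
  have sum_ln: "(\<Sum>i\<in>I n. ln (1 - p n i)) = - \<rho>" for n
  proof -
    have "ln (\<Prod>i\<in>I n. 1 - p n i) = (\<Sum>i\<in>I n. ln (1 - p n i))"
      using p by (intro ln_prod fin) force
    then show ?thesis using prod[of n] by (simp add: \<rho>_def)
  qed
  have "q \<le> 1" unfolding prod[of 0, symmetric] using p by (intro prod_le_1) force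
  then have "0 \<le> \<rho>" using \<open>0 < q\<close> by (simp add: \<rho>_def)
  have "(\<lambda>n. \<Sum>i\<in>I n. ln (1 - t * p n i)) \<longlonglongrightarrow> - t * \<rho>"
  proof (rule tendstoI)
    fix e :: real assume "0 < e"
    define \<epsilon> where "\<epsilon> = min (1/2) (e / (2 * \<rho> + 2))"
    have \<epsilon>: "0 < \<epsilon>" "\<epsilon> \<le> 1/2" "2 * \<epsilon> * \<rho> < e"
      using \<open>0 < e\<close> \<open>0 \<le> \<rho>\<close> by (auto simp: \<epsilon>_def min_def field_simps)
    show "\<forall>\<^sub>F n in sequentially. dist (\<Sum>i\<in>I n. ln (1 - t * p n i)) (- t * \<rho>) < e"
      using small[OF \<open>0 < \<epsilon>\<close>]
    proof eventually_elim
      case (elim n)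
      have "\<bar>(\<Sum>i\<in>I n. ln (1 - t * p n i)) - t * (\<Sum>i\<in>I n. ln (1 - p n i))\<bar> \<le>
          2 * \<epsilon> * - (\<Sum>i\<in>I n. ln (1 - p n i))"
        using elim p \<epsilon> t by (intro abs_sum_ln_one_minus_mult_le) auto
      then show ?case using sum_ln[of n] \<epsilon> by (simp add: dist_real_def)
    qed
  qed
  then have "(\<lambda>n. exp (\<Sum>i\<in>I n. ln (1 - t * p n i))) \<longlonglongrightarrow> exp (- t * \<rho>)"
    by (rule tendsto_exp)
  moreover have "exp (\<Sum>i\<in>I n. ln (1 - t * p n i)) = (\<Prod>i\<in>I n. 1 - t * p n i)" for n
  proof -
    have "t * p n i < 1" if "i \<in> I n" for i
      using p[OF that] t mult_left_le_one_le[of "p n i" t] by linarith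
    then show ?thesis by (simp add: exp_sum fin)
  qed
  moreover have "exp (- t * \<rho>) = q powr t"
    using \<open>0 < q\<close> by (simp add: \<rho>_def powr_def mult.commute)
  ultimately show ?thesis by simp
qed

lemma (in prob_space) indep_vars_indicator:
  assumes "indep_events E I"
  shows "indep_vars (\<lambda>_. borel) (\<lambda>i. indicator (E i) :: 'a \<Rightarrow> real) I"
proof -
  have E: "E i \<in> events" if "i \<in> I" for i using assms that by (auto simp: indep_events_def)
  have "indep_sets (\<lambda>i. sigma_sets (space M) {E i}) I"
    using assms unfolding indep_events_def_alt by (rule indep_sets_sigma) (auto simp: Int_stable_def)
  then have "indep_sets (\<lambda>i. {(indicator (E i) :: 'a \<Rightarrow> real) -` A \<inter> space M |A. A \<in> sets borel}) I"
  proof (rule indep_sets_mono_sets)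
    fix i assume "i \<in> I"
    have "indicator (E i) -` A \<inter> space M \<in> sigma_sets (space M) {E i}" for A :: "real set"
    proof -
      have "indicator (E i) -` A \<inter> space M =
          (if 1 \<in> A then E i else {}) \<union> (if 0 \<in> A then space M - E i else {})"
        using sets.sets_into_space[OF E[OF \<open>i \<in> I\<close>]]
        by (auto simp: indicator_def of_bool_def split: if_splits)
      then show ?thesis
        using sets.sets_into_space[OF E[OF \<open>i \<in> I\<close>]]
        by (auto simp: Un_absorb1 intro: sigma_sets.Basic sigma_sets.Empty sigma_sets.Compl
            sigma_sets_Un sigma_sets_top)
    qed
    then show "{(indicator (E i) :: 'a \<Rightarrow> real) -` A \<inter> space M |A. A \<in> sets borel} \<subseteq>
        sigma_sets (space M) {E i}"
      by blast
  qed
  then show ?thesis unfolding indep_vars_def2 using E by auto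
qed

lemma (in prob_space) expectation_prod_indep_events:
  fixes a b :: real
  assumes "finite I" and "indep_events E I"
  shows "expectation (\<lambda>\<omega>. \<Prod>i\<in>I. a + b * indicator (E i) \<omega>) = (\<Prod>i\<in>I. a + b * prob (E i))"
proof -
  have E: "E i \<in> events" if "i \<in> I" for i using assms that by (auto simp: indep_events_def)
  then have int: "integrable M (\<lambda>\<omega>. a + b * indicator (E i) \<omega>)" if "i \<in> I" for i
    using that by (auto intro!: integrable_real_indicator simp: less_top[symmetric])
  have "indep_vars (\<lambda>_. borel) (\<lambda>i \<omega>. a + b * indicator (E i) \<omega>) I"
    by (rule indep_vars_compose2[OF indep_vars_indicator[OF assms(2)]]) simp
  then have "expectation (\<lambda>\<omega>. \<Prod>i\<in>I. a + b * indicator (E i) \<omega>) =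
      (\<Prod>i\<in>I. expectation (\<lambda>\<omega>. a + b * indicator (E i) \<omega>))"
    by (rule indep_vars_lebesgue_integral[OF \<open>finite I\<close>]) (rule int)
  also have "\<dots> = (\<Prod>i\<in>I. a + b * prob (E i))"
    using E by (intro prod.cong) (auto simp: prob_space less_top[symmetric])
  finally show ?thesis .
qed

lemma (in prob_space) sums_prob_enat_power:
  assumes [measurable]: "\<xi> \<in> measurable M (count_space UNIV)" and "0 \<le> s" "s < 1"
  shows "(\<lambda>k. prob {\<omega> \<in> space M. \<xi> \<omega> = enat k} * s ^ k) sums
    expectation (\<lambda>\<omega>. case \<xi> \<omega> of enat k \<Rightarrow> s ^ k | \<infinity> \<Rightarrow> 0)"
proof -
  define f where "f k \<omega> = indicator {\<omega> \<in> space M. \<xi> \<omega> = enat k} \<omega> * s ^ k" for k \<omega>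
  have ev: "{\<omega> \<in> space M. \<xi> \<omega> = enat k} \<in> events" for k by measurable
  have sums_f: "(\<lambda>k. f k \<omega>) sums (case \<xi> \<omega> of enat k \<Rightarrow> s ^ k | \<infinity> \<Rightarrow> 0)" if "\<omega> \<in> space M" for \<omega>
  proof (cases "\<xi> \<omega>")
    case (enat j)
    then have "(\<lambda>k. f k \<omega>) = (\<lambda>k. if k = j then s ^ j else 0)"
      using that by (auto simp: f_def fun_eq_iff)
    then show ?thesis using sums_single[of j "\<lambda>_. s ^ j"] enat by simp
  next
    case infinity
    then show ?thesis by (simp add: f_def)
  qed
  have "(\<lambda>k. expectation (f k)) sums expectation (\<lambda>\<omega>. \<Sum>k. f k \<omega>)"
  proof (rule sums_integral)
    show "integrable M (f k)" for k
      unfolding f_def using ev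
      by (intro integrable_mult_left integrable_real_indicator) (auto simp: less_top[symmetric])
    have "norm (f k \<omega>) = f k \<omega>" for k \<omega> using \<open>0 \<le> s\<close> by (simp add: f_def)
    then show "AE \<omega> in M. summable (\<lambda>k. norm (f k \<omega>))"
      using sums_f by (auto intro!: AE_I2 sums_summable)
    have "(\<integral>\<omega>. norm (f k \<omega>) \<partial>M) = prob {\<omega> \<in> space M. \<xi> \<omega> = enat k} * s ^ k" for k
      using \<open>0 \<le> s\<close> ev by (simp add: f_def)
    moreover have "prob {\<omega> \<in> space M. \<xi> \<omega> = enat k} * s ^ k \<le> s ^ k" for k
      using \<open>0 \<le> s\<close> by (simp add: mult_left_le_one_le)
    ultimately show "summable (\<lambda>k. \<integral>\<omega>. norm (f k \<omega>) \<partial>M)"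
      using \<open>0 \<le> s\<close> \<open>s < 1\<close>
      by (intro summable_comparison_test'[OF summable_geometric[of s]]) auto
  qed
  moreover have "expectation (f k) = prob {\<omega> \<in> space M. \<xi> \<omega> = enat k} * s ^ k" for k
    using ev by (simp add: f_def[abs_def] integral_mult_left_zero less_top[symmetric])
  moreover have "expectation (\<lambda>\<omega>. \<Sum>k. f k \<omega>) = expectation (\<lambda>\<omega>. case \<xi> \<omega> of enat k \<Rightarrow> s ^ k | \<infinity> \<Rightarrow> 0)"
    using sums_f by (intro Bochner_Integration.integral_cong) (auto simp: sums_iff)
  ultimately show ?thesis by simp
qed

lemma poisson_gf_sums:
  fixes \<rho> s :: real
  shows "(\<lambda>k. exp (- \<rho>) * \<rho> ^ k / fact k * s ^ k) sums exp (- (1 - s) * \<rho>)"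
proof -
  have "(\<lambda>k. exp (- \<rho>) * ((\<rho> * s) ^ k /\<^sub>R fact k)) sums (exp (- \<rho>) * exp (\<rho> * s))"
    by (intro sums_mult exp_converges)
  moreover have "exp (- \<rho>) * exp (\<rho> * s) = exp (- (1 - s) * \<rho>)"
    by (simp add: exp_add[symmetric] algebra_simps)
  ultimately show ?thesis by (simp add: power_mult_distrib divide_inverse mult_ac)
qed

lemma poisson_le_1:
  fixes \<rho> :: real
  assumes "0 \<le> \<rho>"
  shows "exp (- \<rho>) * \<rho> ^ k / fact k \<le> 1"
proof -
  have "(\<lambda>k. exp (- \<rho>) * \<rho> ^ k / fact k) sums 1" using poisson_gf_sums[of \<rho> 1] by simp
  then show ?thesis
    using sum_le_suminf[of "\<lambda>k. exp (- \<rho>) * \<rho> ^ k / fact k" "{k}"] assms by (auto simp: sums_iff)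
qed

lemma poisson_mean_sums:
  fixes \<rho> :: real
  shows "(\<lambda>k. real k * (exp (- \<rho>) * \<rho> ^ k / fact k)) sums \<rho>"
proof -
  have "(\<lambda>k. \<rho> * (exp (- \<rho>) * \<rho> ^ k / fact k)) sums \<rho>"
    using sums_mult[OF poisson_gf_sums[of \<rho> 1], of \<rho>] by simp
  moreover have "real (Suc k) * (exp (- \<rho>) * \<rho> ^ Suc k / fact (Suc k)) =
      \<rho> * (exp (- \<rho>) * \<rho> ^ k / fact k)" for k
    unfolding fact_Suc of_nat_mult by (simp del: of_nat_Suc)
  ultimately have "(\<lambda>k. real (Suc k) * (exp (- \<rho>) * \<rho> ^ Suc k / fact (Suc k))) sums \<rho>"
    by (simp only:)
  then have "(\<lambda>k. real k * (exp (- \<rho>) * \<rho> ^ k / fact k)) sums (\<rho> + real 0 * (exp (- \<rho>) * \<rho> ^ 0 / fact 0))"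
    by (rule sums_Suc_iff[THEN iffD1])
  then show ?thesis by simp
qed

lemma (in prob_space) prob_eq_0_poisson_enat:
  assumes [measurable]: "\<xi> \<in> measurable M (count_space UNIV)" and "poisson_enat M \<xi> \<mu>"
  shows "prob {\<omega> \<in> space M. \<xi> \<omega> = 0} = (if \<mu> = \<infinity> then 0 else exp (- enn2real \<mu>))"
proof (cases "\<mu> = \<infinity>")
  case True
  then have "AE \<omega> in M. \<xi> \<omega> = \<infinity>" using assms(2) by (simp add: poisson_enat_def)
  then have "AE \<omega> in M. \<omega> \<notin> {\<omega> \<in> space M. \<xi> \<omega> = 0}" by (auto elim: eventually_mono)
  then have "prob {\<omega> \<in> space M. \<xi> \<omega> = 0} = 0" by (subst prob_eq_0) auto
  then show ?thesis using True by simp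
next
  case False
  then show ?thesis using assms(2)[unfolded poisson_enat_def] by (auto simp: zero_enat_def)
qed

lemma (in prob_space) AE_finite_poisson_enat:
  assumes [measurable]: "\<xi> \<in> measurable M (count_space UNIV)"
    and "poisson_enat M \<xi> \<mu>" and "\<mu> \<noteq> \<infinity>"
  shows "AE \<omega> in M. \<xi> \<omega> \<noteq> \<infinity>"
proof -
  define E where "E k = {\<omega> \<in> space M. \<xi> \<omega> = enat k}" for k
  have E[measurable]: "E k \<in> events" for k unfolding E_def by measurable
  have "(\<lambda>k. prob (E k)) sums prob (\<Union>k. E k)"
    by (rule finite_measure_UNION) (auto simp: disjoint_family_on_def E_def)
  moreover have "(\<lambda>k. prob (E k)) sums 1"
    using assms(2,3) poisson_gf_sums[of "enn2real \<mu>" 1] by (simp add: poisson_enat_def E_def)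
  ultimately have "prob (\<Union>k. E k) = 1" using sums_unique2 by blast
  then have "AE \<omega> in M. \<omega> \<in> (\<Union>k. E k)" by (intro AE_prob_1) auto
  then show ?thesis by eventually_elim (auto simp: E_def)
qed

lemma (in prob_space) nn_integral_poisson_enat:
  assumes [measurable]: "\<xi> \<in> measurable M (count_space UNIV)" and "poisson_enat M \<xi> \<mu>"
  shows "(\<integral>\<^sup>+\<omega>. ennreal_of_enat (\<xi> \<omega>) \<partial>M) = \<mu>"
proof (cases "\<mu> = \<infinity>")
  case True
  then have "AE \<omega> in M. ennreal_of_enat (\<xi> \<omega>) = \<infinity>"
    using assms(2) by (auto simp: poisson_enat_def elim: eventually_mono)
  then show ?thesis using True by (simp add: nn_integral_cong_AE emeasure_space_1)
next
  case False
  define \<rho> where "\<rho> = enn2real \<mu>"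
  define p where "p k = exp (- \<rho>) * \<rho> ^ k / fact k" for k
  define E where "E k = {\<omega> \<in> space M. \<xi> \<omega> = enat k}" for k
  have \<mu>: "\<mu> = ennreal \<rho>" "0 \<le> \<rho>" using False by (auto simp: \<rho>_def less_top[symmetric])
  have E[measurable]: "E k \<in> events" for k unfolding E_def by measurable
  have "AE \<omega> in M. ennreal_of_enat (\<xi> \<omega>) = (\<Sum>k. of_nat k * indicator (E k) \<omega>)"
    using AE_finite_poisson_enat[OF assms False] AE_space
  proof eventually_elim
    case (elim \<omega>)
    then obtain j where j: "\<xi> \<omega> = enat j" by auto
    then have "(\<lambda>k. of_nat k * indicator (E k) \<omega> :: ennreal) = (\<lambda>k. if k = j then of_nat j else 0)"
      using elim by (auto simp: E_def fun_eq_iff)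
    then show ?case using sums_single[of j "\<lambda>_. of_nat j :: ennreal"] j by (simp add: sums_iff)
  qed
  then have "(\<integral>\<^sup>+\<omega>. ennreal_of_enat (\<xi> \<omega>) \<partial>M) = (\<Sum>k. \<integral>\<^sup>+\<omega>. of_nat k * indicator (E k) \<omega> \<partial>M)"
    by (simp add: nn_integral_cong_AE nn_integral_suminf)
  also have "\<dots> = (\<Sum>k. ennreal (real k * p k))"
  proof (rule suminf_cong)
    fix k
    have "prob (E k) = p k" "0 \<le> p k"
      using assms(2) False \<mu>(2) by (simp_all add: poisson_enat_def E_def p_def \<rho>_def)
    then show "(\<integral>\<^sup>+\<omega>. of_nat k * indicator (E k) \<omega> \<partial>M) = ennreal (real k * p k)"
      by (simp add: nn_integral_cmult_indicator emeasure_eq_measure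
          ennreal_of_nat_eq_real_of_nat ennreal_mult)
  qed
  also have "\<dots> = ennreal \<rho>"
    using poisson_mean_sums[of \<rho>] \<mu>(2) by (subst suminf_ennreal2) (auto simp: p_def sums_iff)
  finally show ?thesis using \<mu> by simp
qed

lemma standard_prob_space_imp_prob_space: "standard_prob_space M \<Longrightarrow> prob_space M"
  unfolding standard_prob_space_def by (auto intro: prob_space.prob_space_completion)

definition avoiding :: "'t set \<Rightarrow> (enat \<times> (nat \<Rightarrow> 't)) set" where
  "avoiding D = {p. \<forall>j. 1 \<le> j \<and> enat j \<le> fst p \<longrightarrow> snd p j \<notin> D}"

lemma rset_Int_eq_empty_iff: "rset N X \<omega> \<inter> D = {} \<longleftrightarrow> (N \<omega>, \<lambda>j. X j \<omega>) \<in> avoiding D"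
  by (auto simp: rset_def avoiding_def)

lemma sets_avoiding:
  fixes D :: "'t::topological_space set"
  assumes [measurable]: "D \<in> sets borel"
  shows "avoiding D \<in> sets elem_space"
proof -
  have "Measurable.pred elem_space (\<lambda>p :: enat \<times> (nat \<Rightarrow> 't). \<forall>j. 1 \<le> j \<and> enat j \<le> fst p \<longrightarrow> snd p j \<notin> D)"
    unfolding elem_space_def by measurable
  then show ?thesis
    by (simp add: avoiding_def elem_space_def Measurable.pred_def space_pair_measure space_PiM)
qed

lemma pcount_Un:
  assumes "D1 \<inter> D2 = {}"
  shows "pcount N X (D1 \<union> D2) \<omega> = pcount N X D1 \<omega> + pcount N X D2 \<omega>"
proof -
  have "(D1 \<union> D2) \<inter> rset N X \<omega> = D1 \<inter> rset N X \<omega> \<union> D2 \<inter> rset N X \<omega>" by blast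
  moreover have "(D1 \<inter> rset N X \<omega>) \<inter> (D2 \<inter> rset N X \<omega>) = {}" using assms by blast
  ultimately show ?thesis by (auto simp: pcount_def card_Un_disjoint)
qed

section \<open>Dissecting systems\<close>

locale dissecting_system =
  fixes \<A> :: "'t set set" and cell :: "nat \<Rightarrow> 't \<Rightarrow> 't set"
  assumes cell_in: "cell n t \<in> \<A>"
    and mem_cell: "t \<in> cell n t"
    and cell_eqI: "s \<in> cell n t \<Longrightarrow> cell n s = cell n t"
    and finite_cells: "finite (range (cell n))"
    and cell_0: "cell 0 t = UNIV"
    and cell_Suc_subset: "cell (Suc n) t \<subseteq> cell n t"
    and cells_separate: "s \<noteq> t \<Longrightarrow> \<exists>n. s \<notin> cell n t"

begin

lemma cell_antimono: "n \<le> m \<Longrightarrow> cell m t \<subseteq> cell n t"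
  by (induction m rule: dec_induct) (use cell_Suc_subset in blast)+

lemma cells_disjoint: "cell n s \<noteq> cell n t \<Longrightarrow> cell n s \<inter> cell n t = {}"
  using cell_eqI by blast

lemma disjoint_family_on_cells: "disjoint_family_on id (range (cell n))"
  unfolding disjoint_family_on_def using cells_disjoint by auto

lemma image_cell: "cell n ` Y = {Q \<in> range (cell n). Q \<inter> Y \<noteq> {}}"
  using cell_eqI mem_cell by blast

lemma eventually_inj_on_cell:
  assumes "finite F"
  shows "\<forall>\<^sub>F n in sequentially. inj_on (cell n) F"
proof -
  have "\<forall>\<^sub>F n in sequentially. s \<notin> cell n t" if st: "s \<noteq> t" for s t
  proof -
    obtain n where "s \<notin> cell n t" using cells_separate[OF st] by blast
    then have "\<forall>m\<ge>n. s \<notin> cell m t" using cell_antimono by blast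
    then show ?thesis unfolding eventually_sequentially by blast
  qed
  then have "\<forall>\<^sub>F n in sequentially. \<forall>(s, t)\<in>F \<times> F. s \<noteq> t \<longrightarrow> s \<notin> cell n t"
    using \<open>finite F\<close> by (intro eventually_ball_finite) auto
  then show ?thesis
    by eventually_elim (use mem_cell in \<open>fastforce simp: inj_on_def\<close>)
qed

lemma range_cell_eqI: "Q \<in> range (cell n) \<Longrightarrow> t \<in> Q \<Longrightarrow> Q = cell n t"
  by (metis cell_eqI rangeE)

lemma nested_cells_Inter_subset_singleton:
  assumes "\<And>n. Q n \<in> range (cell n)"
  obtains t where "(\<Inter>n. Q n) \<subseteq> {t}"
proof (cases "(\<Inter>n. Q n) = {}")
  case False
  then obtain t where t: "t \<in> (\<Inter>n. Q n)" by blast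
  have "s = t" if s: "s \<in> (\<Inter>n. Q n)" for s
  proof (rule ccontr)
    assume "s \<noteq> t"
    then obtain n where "s \<notin> cell n t" using cells_separate by blast
    moreover have "Q n = cell n t" using t by (intro range_cell_eqI[OF assms]) blast
    ultimately show False using s by blast
  qed
  then show ?thesis using that by blast
qed (use that in blast)

definition has_descendants_with :: "('t set \<Rightarrow> bool) \<Rightarrow> nat \<Rightarrow> 't set \<Rightarrow> bool" where
  "has_descendants_with P n Q \<longleftrightarrow> Q \<in> range (cell n) \<and> (\<forall>m\<ge>n. \<exists>t\<in>Q. P (cell m t))"

lemma has_descendants_with_child:
  assumes up: "\<And>m n t. n \<le> m \<Longrightarrow> P (cell m t) \<Longrightarrow> P (cell n t)"
    and Q: "has_descendants_with P n Q"
  shows "\<exists>Q'. has_descendants_with P (Suc n) Q' \<and> Q' \<subseteq> Q"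
proof (rule ccontr)
  assume no_child: "\<not> ?thesis"
  have "\<exists>m\<ge>Suc n. \<forall>t\<in>Q'. \<not> P (cell m t)" if "Q' \<in> range (cell (Suc n))" "Q' \<subseteq> Q" for Q'
    using no_child that by (auto simp: has_descendants_with_def)
  then obtain m where m: "\<And>Q'. Q' \<in> range (cell (Suc n)) \<Longrightarrow> Q' \<subseteq> Q \<Longrightarrow>
      m Q' \<ge> Suc n \<and> (\<forall>t\<in>Q'. \<not> P (cell (m Q') t))"
    by metis
  define M where "M = Max (insert n (m ` range (cell (Suc n))))"
  have m_le_M: "m Q' \<le> M" if "Q' \<in> range (cell (Suc n))" for Q'
    unfolding M_def using finite_cells that by (intro Max_ge) auto
  have "n \<le> M" unfolding M_def using finite_cells by (intro Max_ge) auto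
  then obtain t where t: "t \<in> Q" "P (cell M t)"
    using Q by (auto simp: has_descendants_with_def)
  have "Q = cell n t"
    using Q t(1) by (intro range_cell_eqI) (auto simp: has_descendants_with_def)
  then have child: "cell (Suc n) t \<subseteq> Q" using cell_Suc_subset by simp
  have "m (cell (Suc n) t) \<le> M" using m_le_M by blast
  then have "P (cell (m (cell (Suc n) t)) t)"
    using t(2) by (rule up)
  moreover have "\<not> P (cell (m (cell (Suc n) t)) t)"
    using m[OF rangeI child] mem_cell by blast
  ultimately show False by contradiction
qed

text \<open>Koenig's lemma for the finitely branching tree of cells.\<close>
lemma ex_nested_cells:
  assumes up: "\<And>m n t. n \<le> m \<Longrightarrow> P (cell m t) \<Longrightarrow> P (cell n t)"
    and ex: "\<And>n. \<exists>t. P (cell n t)"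
  shows "\<exists>Q. \<forall>n. Q n \<in> range (cell n) \<and> P (Q n) \<and> Q (Suc n) \<subseteq> Q n"
proof -
  have "has_descendants_with P 0 UNIV"
    using ex cell_0 by (auto simp: has_descendants_with_def)
  moreover have "\<exists>Q'. has_descendants_with P (Suc n) Q' \<and> Q' \<subseteq> Q"
    if "has_descendants_with P n Q" for n Q
    using up that by (rule has_descendants_with_child)
  ultimately obtain Q where Q: "\<And>n. has_descendants_with P n (Q n) \<and> Q (Suc n) \<subseteq> Q n"
    using dependent_nat_choice[of "has_descendants_with P" "\<lambda>_ Q Q'. Q' \<subseteq> Q"] by blast
  have "P (Q n)" for n
  proof -
    obtain t where t: "t \<in> Q n" "P (cell n t)" using Q[of n] unfolding has_descendants_with_def by blast
    have "Q n = cell n t"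
      using Q[of n] t(1) by (intro range_cell_eqI) (auto simp: has_descendants_with_def)
    then show ?thesis using t(2) by simp
  qed
  then show ?thesis using Q unfolding has_descendants_with_def by blast
qed

end

lemma dissecting_system_of_separating_seq:
  assumes "algebra UNIV \<A>" and "range G \<subseteq> \<A>"
    and sep: "\<And>s t. s \<noteq> t \<Longrightarrow> \<exists>i. (s \<in> G i) \<noteq> (t \<in> G i)"
  shows "dissecting_system \<A> (\<lambda>n t. {s. \<forall>i<n. s \<in> G i \<longleftrightarrow> t \<in> G i})"
proof
  interpret algebra UNIV \<A> by fact
  fix n :: nat and s t
  show "{s. \<forall>i<n. s \<in> G i \<longleftrightarrow> t \<in> G i} \<in> \<A>"
  proof (induction n)
    case (Suc n)
    have "{s. \<forall>i<Suc n. s \<in> G i \<longleftrightarrow> t \<in> G i} =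
        {s. \<forall>i<n. s \<in> G i \<longleftrightarrow> t \<in> G i} \<inter> (if t \<in> G n then G n else UNIV - G n)"
      by (auto simp: less_Suc_eq)
    moreover have "G n \<in> \<A>" using \<open>range G \<subseteq> \<A>\<close> by blast
    ultimately show ?case using Suc by (simp add: Int Diff)
  qed simp
  have "range (\<lambda>t. {s. \<forall>i<n. s \<in> G i \<longleftrightarrow> t \<in> G i}) \<subseteq>
      (\<lambda>I. {s. \<forall>i<n. s \<in> G i \<longleftrightarrow> i \<in> I}) ` Pow {..<n}"
  proof (rule image_subsetI)
    fix t
    show "{s. \<forall>i<n. s \<in> G i \<longleftrightarrow> t \<in> G i} \<in> (\<lambda>I. {s. \<forall>i<n. s \<in> G i \<longleftrightarrow> i \<in> I}) ` Pow {..<n}"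
      by (rule image_eqI[of _ _ "{i. i < n \<and> t \<in> G i}"]) auto
  qed
  then show "finite (range (\<lambda>t. {s. \<forall>i<n. s \<in> G i \<longleftrightarrow> t \<in> G i}))"
    by (rule finite_subset) auto
  show "s \<noteq> t \<Longrightarrow> \<exists>n. s \<notin> {s. \<forall>i<n. s \<in> G i \<longleftrightarrow> t \<in> G i}"
  proof -
    assume "s \<noteq> t"
    then obtain i where "(s \<in> G i) \<noteq> (t \<in> G i)" using sep by blast
    then show ?thesis by (intro exI[of _ "Suc i"]) auto
  qed
qed auto

section \<open>Void probabilities\<close>

locale indep_random_set = prob_space M for M :: "'w measure" +
  fixes N :: "'w \<Rightarrow> enat" and X :: "nat \<Rightarrow> 'w \<Rightarrow> 't::t1_space" and \<A> :: "'t set set"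
  assumes measurable_N[measurable]: "N \<in> measurable M (count_space UNIV)"
    and measurable_X[measurable]: "\<And>j. X j \<in> borel_measurable M"
    and algebra_\<A>: "algebra UNIV \<A>" and \<A>_borel: "\<A> \<subseteq> sets borel"
    and independence: "independence_condition M N X \<A>"
    and no_fixed_atoms: "\<And>t. prob {\<omega> \<in> space M. t \<in> rset N X \<omega>} = 0"

begin

definition void_event :: "'t set \<Rightarrow> 'w set" where
  "void_event D = {\<omega> \<in> space M. rset N X \<omega> \<inter> D = {}}"

definition void_prob :: "'t set \<Rightarrow> real" where
  "void_prob D = prob (void_event D)"

lemma sets_void_event[measurable]:
  assumes [measurable]: "D \<in> sets borel"
  shows "void_event D \<in> sets M"
proof -
  have "void_event D = {\<omega> \<in> space M. \<forall>j. 1 \<le> j \<and> enat j \<le> N \<omega> \<longrightarrow> X j \<omega> \<notin> D}"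
    unfolding void_event_def rset_def by auto
  also have "\<dots> \<in> sets M" by measurable
  finally show ?thesis .
qed

lemma void_event_Un: "void_event (C \<union> D) = void_event C \<inter> void_event D"
  unfolding void_event_def by auto

lemma void_event_UN: "I \<noteq> {} \<Longrightarrow> void_event (\<Union>i\<in>I. D i) = (\<Inter>i\<in>I. void_event (D i))"
  unfolding void_event_def by auto

lemma void_event_antimono: "C \<subseteq> D \<Longrightarrow> void_event D \<subseteq> void_event C"
  unfolding void_event_def by auto

lemma void_event_eq_pcount_0: "void_event D = {\<omega> \<in> space M. pcount N X D \<omega> = 0}"
  by (auto simp: void_event_def pcount_def zero_enat_def Int_commute)

lemma void_prob_empty[simp]: "void_prob {} = 1"
  by (simp add: void_prob_def void_event_def prob_space)

lemma void_prob_nonneg[simp]: "0 \<le> void_prob D"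
  by (simp add: void_prob_def)

lemma void_prob_le_1[simp]: "void_prob D \<le> 1"
  by (simp add: void_prob_def)

lemma void_prob_antimono: "C \<subseteq> D \<Longrightarrow> C \<in> sets borel \<Longrightarrow> void_prob D \<le> void_prob C"
  unfolding void_prob_def by (intro finite_measure_mono void_event_antimono) auto

lemma void_prob_eq_0_iff: "D \<in> sets borel \<Longrightarrow> void_prob D = 0 \<longleftrightarrow> (AE \<omega> in M. \<omega> \<notin> void_event D)"
  unfolding void_prob_def by (simp add: prob_eq_0)

lemma tendsto_void_prob_incseq:
  assumes "\<And>n. D n \<in> sets borel" and "incseq D"
  shows "(\<lambda>n. void_prob (D n)) \<longlonglongrightarrow> void_prob (\<Union>n. D n)"
proof -
  have "decseq (\<lambda>n. void_event (D n))"
    using \<open>incseq D\<close> void_event_antimono by (auto simp: incseq_def decseq_def)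
  then have "(\<lambda>n. prob (void_event (D n))) \<longlonglongrightarrow> prob (\<Inter>n. void_event (D n))"
    using assms(1) by (intro finite_Lim_measure_decseq) auto
  then show ?thesis by (simp add: void_prob_def void_event_UN)
qed

lemma AE_void_event_singleton: "AE \<omega> in M. \<omega> \<in> void_event {t}"
proof -
  have "space M - void_event {t} = {\<omega> \<in> space M. t \<in> rset N X \<omega>}"
    unfolding void_event_def by auto
  then have "prob (space M - void_event {t}) = 0"
    using no_fixed_atoms by simp
  then show ?thesis by (subst (asm) prob_eq_0) (auto elim: eventually_mono)
qed

lemma void_prob_insert:
  assumes "D \<in> sets borel"
  shows "void_prob (insert t D) = void_prob D"
proof -
  have "AE \<omega> in M. \<omega> \<in> void_event D \<inter> void_event {t} \<longleftrightarrow> \<omega> \<in> void_event D"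
    using AE_void_event_singleton[of t] by eventually_elim auto
  then show ?thesis
    unfolding void_prob_def insert_is_Un[of t D] Un_commute[of "{t}"] void_event_Un
    by (rule measure_eq_AE) (use assms in auto)
qed

lemma void_prob_Diff_singleton:
  assumes "D \<in> sets borel"
  shows "void_prob (D - {t}) = void_prob D"
  using void_prob_insert[of "D - {t}" t] void_prob_insert[OF assms, of t] assms by simp

lemma AE_void_event_fragment:
  assumes "AE \<omega> in M. A \<inter> rset N X \<omega> = rset N' X' \<omega>" and "D \<subseteq> A"
  shows "AE \<omega> in M. \<omega> \<in> void_event D \<longleftrightarrow> (N' \<omega>, \<lambda>j. X' j \<omega>) \<in> avoiding D"
  using assms(1) AE_space
proof eventually_elim
  case (elim \<omega>)
  have "rset N X \<omega> \<inter> D = (A \<inter> rset N X \<omega>) \<inter> D" using \<open>D \<subseteq> A\<close> by blast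
  also have "\<dots> = rset N' X' \<omega> \<inter> D" using elim by simp
  finally show ?case using elim by (simp add: void_event_def rset_Int_eq_empty_iff[symmetric])
qed

text \<open>The independence condition is only needed for two fragments; the algebra structure of
  \<^term>\<open>\<A>\<close> reduces finitely many fragments to this case.\<close>
lemma void_prob_Un_separated:
  assumes "A1 \<in> \<A>" "A2 \<in> \<A>" "A1 \<inter> A2 = {}"
    and "D1 \<in> sets borel" "D2 \<in> sets borel" and "D1 \<subseteq> A1" "D2 \<subseteq> A2"
  shows "void_prob (D1 \<union> D2) = void_prob D1 * void_prob D2"
proof -
  define A where "A i = (if i = 0 then A1 else A2)" for i :: nat
  define D where "D i = (if i = 0 then D1 else D2)" for i :: nat
  have "disjoint_family_on A {..<2}"
    using assms(3) by (auto simp: disjoint_family_on_def A_def)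
  moreover have "\<forall>i<2. A i \<in> \<A>" using assms(1,2) by (simp add: A_def)
  ultimately obtain N' X' where
    indep: "indep_vars (\<lambda>i. elem_space) (\<lambda>i \<omega>. (N' i \<omega>, \<lambda>j. X' i j \<omega>)) {..<2}" and
    fragment: "\<forall>i<2. AE \<omega> in M. A i \<inter> rset N X \<omega> = rset (N' i) (X' i) \<omega>"
    using independence[unfolded independence_condition_def, rule_format, of 2 A]
    unfolding indep_fragments_def by auto
  define E where "E i = (\<lambda>\<omega>. (N' i \<omega>, \<lambda>j. X' i j \<omega>)) -` avoiding (D i) \<inter> space M" for i
  have avoiding_D: "avoiding (D i) \<in> sets elem_space" for i
    using assms(4,5) by (simp add: D_def sets_avoiding)
  have [measurable]: "D i \<in> sets borel" for i using assms(4,5) by (simp add: D_def)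
  have E: "E i \<in> sets M" if "i < 2" for i
    using indep that avoiding_D unfolding E_def indep_vars_def by (auto intro: measurable_sets)
  have ae: "AE \<omega> in M. \<omega> \<in> void_event (D i) \<longleftrightarrow> \<omega> \<in> E i" if "i < 2" for i
  proof -
    have "D i \<subseteq> A i" using assms(6,7) by (simp add: D_def A_def)
    from AE_void_event_fragment[OF fragment[rule_format, OF that] this] AE_space show ?thesis
      by eventually_elim (auto simp: E_def)
  qed
  have void_E: "void_prob (D i) = prob (E i)" if "i < 2" for i
    unfolding void_prob_def using ae[OF that] E[OF that] by (intro measure_eq_AE) auto
  have "AE \<omega> in M. \<omega> \<in> void_event (D 0) \<inter> void_event (D 1) \<longleftrightarrow> \<omega> \<in> E 0 \<inter> E 1"
    using ae[of 0] ae[of 1] by (auto elim: AE_mp)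
  then have void2_E: "void_prob (D 0 \<union> D 1) = prob (E 0 \<inter> E 1)"
    unfolding void_prob_def void_event_Un using E[of 0] E[of 1] by (intro measure_eq_AE) auto
  have "prob (\<Inter>i\<in>{..<2}. E i) = (\<Prod>i\<in>{..<2}. prob (E i))"
    unfolding E_def using avoiding_D by (intro indep_varsD[OF indep]) (auto simp: lessThan_empty_iff)
  then show ?thesis
    using void_E[of 0] void_E[of 1] void2_E
    by (simp add: D_def numeral_2_eq_2 lessThan_Suc Int_commute mult.commute)
qed

lemma void_prob_UN_separated:
  assumes "finite I" and A: "\<And>i. i \<in> I \<Longrightarrow> A i \<in> \<A>" and "disjoint_family_on A I"
    and D: "\<And>i. i \<in> I \<Longrightarrow> D i \<in> sets borel" "\<And>i. i \<in> I \<Longrightarrow> D i \<subseteq> A i"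
  shows "void_prob (\<Union>i\<in>I. D i) = (\<Prod>i\<in>I. void_prob (D i))"
proof (rule multiplicative_UN[where f = void_prob, OF \<open>finite I\<close> void_prob_empty])
  interpret algebra UNIV \<A> by (rule algebra_\<A>)
  fix i J assume "finite J" "J \<subseteq> I" "i \<in> I" "i \<notin> J"
  show "void_prob (D i \<union> (\<Union>j\<in>J. D j)) = void_prob (D i) * void_prob (\<Union>j\<in>J. D j)"
  proof (rule void_prob_Un_separated)
    show "A i \<in> \<A>" "(\<Union>j\<in>J. A j) \<in> \<A>"
      using A \<open>finite J\<close> \<open>J \<subseteq> I\<close> \<open>i \<in> I\<close> by (auto intro!: finite_UN)
    show "A i \<inter> (\<Union>j\<in>J. A j) = {}"
      using \<open>disjoint_family_on A I\<close> \<open>J \<subseteq> I\<close> \<open>i \<in> I\<close> \<open>i \<notin> J\<close>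
      by (fastforce simp: disjoint_family_on_def)
  qed (use D \<open>finite J\<close> \<open>J \<subseteq> I\<close> \<open>i \<in> I\<close> in \<open>auto intro!: sets.finite_UN\<close>)
qed

end

section \<open>Counting points through cells\<close>

locale dissected_random_set =
  indep_random_set M N X \<A> + dissecting_system \<A> cell
  for M :: "'w measure" and N X and \<A> :: "'t::t1_space set set" and cell

begin

lemma sets_cell[measurable]: "cell n t \<in> sets borel"
  using cell_in \<A>_borel by blast

definition cell_count :: "nat \<Rightarrow> 't set \<Rightarrow> 'w \<Rightarrow> nat" where
  "cell_count n C \<omega> = card (cell n ` (C \<inter> rset N X \<omega>))"

lemma cell_count_le:
  "finite (C \<inter> rset N X \<omega>) \<Longrightarrow> cell_count n C \<omega> \<le> card (C \<inter> rset N X \<omega>)"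
  unfolding cell_count_def by (rule card_image_le)

lemma eventually_card_le_cell_count:
  assumes "finite F" and "F \<subseteq> C \<inter> rset N X \<omega>"
  shows "\<forall>\<^sub>F n in sequentially. card F \<le> cell_count n C \<omega>"
  using eventually_inj_on_cell[OF \<open>finite F\<close>]
proof eventually_elim
  case (elim n)
  have "finite (cell n ` (C \<inter> rset N X \<omega>))"
    using finite_cells by (rule finite_subset[rotated]) auto
  then have "card (cell n ` F) \<le> cell_count n C \<omega>"
    unfolding cell_count_def using assms(2) by (intro card_mono) auto
  then show ?case using elim by (simp add: card_image)
qed

lemma eventually_cell_count_eq:
  assumes "finite (C \<inter> rset N X \<omega>)"
  shows "\<forall>\<^sub>F n in sequentially. cell_count n C \<omega> = card (C \<inter> rset N X \<omega>)"
  using eventually_card_le_cell_count[OF assms order_refl]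
  by eventually_elim (use cell_count_le[OF assms] in \<open>simp add: antisym\<close>)

lemma filterlim_cell_count:
  assumes "infinite (C \<inter> rset N X \<omega>)"
  shows "filterlim (\<lambda>n. cell_count n C \<omega>) at_top sequentially"
  unfolding filterlim_at_top
proof
  fix k
  obtain F where "finite F" "card F = k" "F \<subseteq> C \<inter> rset N X \<omega>"
    using infinite_arbitrarily_large[OF assms] by blast
  then show "\<forall>\<^sub>F n in sequentially. k \<le> cell_count n C \<omega>"
    using eventually_card_le_cell_count by blast
qed

lemma pcount_eq_SUP_cell_count: "pcount N X C \<omega> = (SUP n. enat (cell_count n C \<omega>))"
proof (cases "finite (C \<inter> rset N X \<omega>)")
  case True
  obtain n where "cell_count n C \<omega> = card (C \<inter> rset N X \<omega>)"
    using eventually_cell_count_eq[OF True] by (auto simp: eventually_sequentially)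
  then have "enat (card (C \<inter> rset N X \<omega>)) \<le> (SUP n. enat (cell_count n C \<omega>))"
    by (metis SUP_upper UNIV_I)
  moreover have "(SUP n. enat (cell_count n C \<omega>)) \<le> enat (card (C \<inter> rset N X \<omega>))"
    using cell_count_le[OF True] by (intro SUP_least) simp
  ultimately show ?thesis using True by (simp add: pcount_def Int_commute antisym)
next
  case False
  have unbounded: "\<exists>n. x < enat (cell_count n C \<omega>)" if "x < \<infinity>" for x
  proof -
    obtain k where "x = enat k" using \<open>x < \<infinity>\<close> by (cases x) auto
    moreover obtain n where "Suc k \<le> cell_count n C \<omega>"
      using filterlim_cell_count[OF False] by (auto simp: filterlim_at_top eventually_sequentially)
    ultimately show ?thesis by (auto simp: Suc_le_eq)
  qed
  have "(SUP n. enat (cell_count n C \<omega>)) = \<top>"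
    by (subst SUP_eq_top_iff) (use unbounded in \<open>auto simp: top_enat_def\<close>)
  then show ?thesis using False by (simp add: pcount_def Int_commute top_enat_def)
qed

lemma cell_count_eq_card_void:
  assumes "\<omega> \<in> space M"
  shows "cell_count n C \<omega> = card {Q \<in> range (cell n). \<omega> \<notin> void_event (C \<inter> Q)}"
proof -
  have "cell n ` (C \<inter> rset N X \<omega>) = {Q \<in> range (cell n). \<omega> \<notin> void_event (C \<inter> Q)}"
    using image_cell[of n "C \<inter> rset N X \<omega>"] assms by (auto simp: void_event_def)
  then show ?thesis by (simp add: cell_count_def)
qed

lemma measurable_cell_count_subalgebra:
  assumes "space M' = space M" and void: "\<And>t. void_event (C \<inter> cell n t) \<in> sets M'"
  shows "cell_count n C \<in> measurable M' (count_space UNIV)"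
proof -
  have "(\<lambda>\<omega>. \<Sum>Q\<in>range (cell n). if \<omega> \<in> void_event (C \<inter> Q) then 0 else 1 :: nat)
      \<in> measurable M' (count_space UNIV)"
  proof (rule measurable_sum_nat)
    fix Q assume "Q \<in> range (cell n)"
    then have "void_event (C \<inter> Q) \<inter> space M' \<in> sets M'" using void by auto
    then show "(\<lambda>\<omega>. if \<omega> \<in> void_event (C \<inter> Q) then 0 else 1 :: nat) \<in> measurable M' (count_space UNIV)"
      by (intro measurable_If_set) auto
  qed
  moreover have "cell_count n C \<omega> = (\<Sum>Q\<in>range (cell n). if \<omega> \<in> void_event (C \<inter> Q) then 0 else 1)"
    if "\<omega> \<in> space M'" for \<omega>
  proof -
    have "cell_count n C \<omega> = (\<Sum>Q\<in>{Q \<in> range (cell n). \<omega> \<notin> void_event (C \<inter> Q)}. 1)"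
      using that by (simp add: cell_count_eq_card_void assms(1))
    also have "\<dots> = (\<Sum>Q\<in>range (cell n). if \<omega> \<notin> void_event (C \<inter> Q) then 1 else 0)"
      by (rule sum.inter_filter[OF finite_cells])
    finally show ?thesis by (auto intro!: sum.cong)
  qed
  ultimately show ?thesis by (simp cong: measurable_cong)
qed

lemma measurable_pcount_subalgebra:
  assumes "space M' = space M" and "\<And>n t. void_event (C \<inter> cell n t) \<in> sets M'"
  shows "pcount N X C \<in> measurable M' (count_space UNIV)"
proof -
  have [measurable]: "cell_count n C \<in> measurable M' (count_space UNIV)" for n
    using assms by (rule measurable_cell_count_subalgebra)
  show ?thesis unfolding pcount_eq_SUP_cell_count[abs_def] by measurable
qed

lemma measurable_cell_count[measurable]:
  "C \<in> sets borel \<Longrightarrow> cell_count n C \<in> measurable M (count_space UNIV)"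
  by (rule measurable_cell_count_subalgebra) auto

lemma measurable_pcount[measurable]:
  "C \<in> sets borel \<Longrightarrow> pcount N X C \<in> measurable M (count_space UNIV)"
  by (rule measurable_pcount_subalgebra) auto

lemma void_prob_cells:
  assumes "C \<in> sets borel"
  shows "void_prob C = (\<Prod>Q\<in>range (cell n). void_prob (C \<inter> Q))"
proof -
  have "(\<Union>Q\<in>range (cell n). C \<inter> Q) = C" using mem_cell by blast
  moreover have "void_prob (\<Union>Q\<in>range (cell n). C \<inter> Q) = (\<Prod>Q\<in>range (cell n). void_prob (C \<inter> Q))"
    using assms cell_in finite_cells disjoint_family_on_cells
    by (intro void_prob_UN_separated[where A=id]) auto
  ultimately show ?thesis by simp
qed

lemma indep_events_void_cells:
  assumes "C \<in> sets borel"
  shows "indep_events (\<lambda>Q. void_event (C \<inter> Q)) (range (cell n))"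
proof (rule indep_eventsI)
  fix J assume J: "J \<subseteq> range (cell n)" "finite J" "J \<noteq> {}"
  have "(\<Inter>Q\<in>J. void_event (C \<inter> Q)) = void_event (\<Union>Q\<in>J. C \<inter> Q)"
    by (rule void_event_UN[symmetric, OF J(3)])
  then have "prob (\<Inter>Q\<in>J. void_event (C \<inter> Q)) = void_prob (\<Union>Q\<in>J. C \<inter> Q)"
    by (simp only: void_prob_def)
  also have "\<dots> = (\<Prod>Q\<in>J. void_prob (C \<inter> Q))"
    using assms J cell_in disjoint_family_on_mono[OF J(1) disjoint_family_on_cells]
    by (intro void_prob_UN_separated[where A=id]) auto
  finally show "prob (\<Inter>Q\<in>J. void_event (C \<inter> Q)) = (\<Prod>Q\<in>J. prob (void_event (C \<inter> Q)))"
    by (simp add: void_prob_def)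
qed (use assms in auto)

lemma expectation_power_cell_count:
  assumes "C \<in> sets borel"
  shows "expectation (\<lambda>\<omega>. s ^ cell_count n C \<omega>) = (\<Prod>Q\<in>range (cell n). s + (1 - s) * void_prob (C \<inter> Q))"
proof -
  have "s ^ cell_count n C \<omega> = (\<Prod>Q\<in>range (cell n). s + (1 - s) * indicator (void_event (C \<inter> Q)) \<omega>)"
    if "\<omega> \<in> space M" for \<omega>
  proof -
    have "s ^ cell_count n C \<omega> = (\<Prod>Q\<in>{Q \<in> range (cell n). \<omega> \<notin> void_event (C \<inter> Q)}. s)"
      using that by (simp add: cell_count_eq_card_void)
    also have "\<dots> = (\<Prod>Q\<in>range (cell n). if \<omega> \<notin> void_event (C \<inter> Q) then s else 1)"
      by (rule prod.inter_filter[OF finite_cells])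
    finally show ?thesis by (auto simp: indicator_def intro!: prod.cong)
  qed
  then have "expectation (\<lambda>\<omega>. s ^ cell_count n C \<omega>) =
      expectation (\<lambda>\<omega>. \<Prod>Q\<in>range (cell n). s + (1 - s) * indicator (void_event (C \<inter> Q)) \<omega>)"
    by (rule Bochner_Integration.integral_cong[OF refl])
  also have "\<dots> = (\<Prod>Q\<in>range (cell n). s + (1 - s) * void_prob (C \<inter> Q))"
    unfolding void_prob_def using finite_cells indep_events_void_cells[OF assms]
    by (rule expectation_prod_indep_events)
  finally show ?thesis .
qed

lemma tendsto_power_cell_count:
  fixes s :: real
  assumes "0 \<le> s" "s < 1"
  shows "(\<lambda>n. s ^ cell_count n C \<omega>) \<longlonglongrightarrow> (case pcount N X C \<omega> of enat k \<Rightarrow> s ^ k | \<infinity> \<Rightarrow> 0)"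
proof (cases "finite (C \<inter> rset N X \<omega>)")
  case True
  have "\<forall>\<^sub>F n in sequentially. s ^ cell_count n C \<omega> = s ^ card (C \<inter> rset N X \<omega>)"
    using eventually_cell_count_eq[OF True] by eventually_elim simp
  then show ?thesis
    using True by (simp add: pcount_def Int_commute tendsto_eventually)
next
  case False
  have "(\<lambda>k. s ^ k) \<longlonglongrightarrow> 0" using assms by (intro LIMSEQ_power_zero) simp
  then have "(\<lambda>n. s ^ cell_count n C \<omega>) \<longlonglongrightarrow> 0"
    using filterlim_compose filterlim_cell_count[OF False] by blast
  then show ?thesis using False by (simp add: pcount_def Int_commute)
qed

lemma tendsto_expectation_power_cell_count:
  fixes s :: real
  assumes [measurable]: "C \<in> sets borel" and "0 \<le> s" "s < 1"
  shows "(\<lambda>n. expectation (\<lambda>\<omega>. s ^ cell_count n C \<omega>)) \<longlonglongrightarrow>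
    expectation (\<lambda>\<omega>. case pcount N X C \<omega> of enat k \<Rightarrow> s ^ k | \<infinity> \<Rightarrow> 0)"
proof (rule integral_dominated_convergence[where s="\<lambda>n \<omega>. s ^ cell_count n C \<omega>" and w="\<lambda>_. 1"])
  show "(\<lambda>\<omega>. case pcount N X C \<omega> of enat k \<Rightarrow> s ^ k | \<infinity> \<Rightarrow> 0) \<in> borel_measurable M"
    by (rule measurable_compose[OF measurable_pcount[OF assms(1)]]) simp
  show "(\<lambda>\<omega>. s ^ cell_count n C \<omega>) \<in> borel_measurable M" for n
    by (rule measurable_compose[OF measurable_cell_count[OF assms(1)]]) simp
  show "AE \<omega> in M. norm (s ^ cell_count n C \<omega>) \<le> 1" for n
    using assms by (simp add: power_le_one)
  show "AE \<omega> in M. (\<lambda>n. s ^ cell_count n C \<omega>) \<longlonglongrightarrow> (case pcount N X C \<omega> of enat k \<Rightarrow> s ^ k | \<infinity> \<Rightarrow> 0)"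
    using tendsto_power_cell_count[OF assms(2,3)] by simp
qed simp

section \<open>The Poisson law of the counts\<close>

lemma tendsto_void_prob_nested_cells_Diff:
  assumes C: "C \<in> sets borel" and Q: "\<And>n. Q n \<in> range (cell n)" "\<And>n. Q (Suc n) \<subseteq> Q n"
  shows "(\<lambda>m. void_prob (C \<inter> (Q n - Q m))) \<longlonglongrightarrow> void_prob (C \<inter> Q n)"
proof -
  have [measurable]: "Q m \<in> sets borel" for m using Q(1)[of m] by auto
  have "decseq Q" using Q(2) by (rule decseq_SucI)
  then have "(\<lambda>m. void_prob (C \<inter> (Q n - Q m))) \<longlonglongrightarrow> void_prob (\<Union>m. C \<inter> (Q n - Q m))"
    using C by (intro tendsto_void_prob_incseq) (auto simp: incseq_def decseq_def)
  moreover have U: "(\<Union>m. C \<inter> (Q n - Q m)) = C \<inter> Q n - (\<Inter>m. Q m)" by blast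
  obtain t where t: "(\<Inter>m. Q m) \<subseteq> {t}" using nested_cells_Inter_subset_singleton[OF Q(1)] .
  have "void_prob (C \<inter> Q n - (\<Inter>m. Q m)) = void_prob (C \<inter> Q n)"
  proof (cases "(\<Inter>m. Q m) = {}")
    case False
    then have "(\<Inter>m. Q m) = {t}" using t by blast
    then show ?thesis using C by (simp add: void_prob_Diff_singleton)
  qed simp
  ultimately show ?thesis by (simp only: U)
qed

text \<open>Splitting \<open>C \<inter> Q n\<close> along \<open>Q m\<close> gives \<open>z (C \<inter> Q n) \<le> (1 - \<epsilon>) z (C \<inter> (Q n - Q m))\<close>,
  and the right-hand side tends to \<open>(1 - \<epsilon>) z (C \<inter> Q n)\<close>.\<close>
lemma void_prob_nested_cells_eq_0:
  assumes C: "C \<in> sets borel" and Q: "\<And>n. Q n \<in> range (cell n)" "\<And>n. Q (Suc n) \<subseteq> Q n"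
    and heavy: "\<And>n. void_prob (C \<inter> Q n) \<le> 1 - \<epsilon>" and "0 < \<epsilon>"
  shows "void_prob (C \<inter> Q n) = 0"
proof -
  interpret algebra UNIV \<A> by (rule algebra_\<A>)
  have Q_in: "Q m \<in> \<A>" for m using Q(1)[of m] cell_in by auto
  define a where "a = void_prob (C \<inter> Q n)"
  have le: "a \<le> void_prob (C \<inter> (Q n - Q m)) * (1 - \<epsilon>)" if "n \<le> m" for m
  proof -
    have "Q m \<subseteq> Q n" using decseq_SucI[of Q] Q(2) that by (simp add: decseq_def)
    then have "C \<inter> Q n = C \<inter> (Q n - Q m) \<union> C \<inter> Q m" by blast
    then have "a = void_prob (C \<inter> (Q n - Q m) \<union> C \<inter> Q m)"
      unfolding a_def by (rule arg_cong)
    also have "\<dots> = void_prob (C \<inter> (Q n - Q m)) * void_prob (C \<inter> Q m)"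
      using Q_in C \<A>_borel by (intro void_prob_Un_separated[of "Q n - Q m" "Q m"] Diff) auto
    finally show ?thesis using heavy[of m] by (simp add: mult_left_mono)
  qed
  have "(\<lambda>m. void_prob (C \<inter> (Q n - Q m)) * (1 - \<epsilon>)) \<longlonglongrightarrow> a * (1 - \<epsilon>)"
    unfolding a_def using C Q by (intro tendsto_mult_right tendsto_void_prob_nested_cells_Diff)
  then have "a \<le> a * (1 - \<epsilon>)"
    by (rule LIMSEQ_le_const) (use le in auto)
  then show ?thesis
    using \<open>0 < \<epsilon>\<close> void_prob_nonneg[of "C \<inter> Q n"] unfolding a_def
    by (simp add: algebra_simps mult_le_0_iff)
qed

lemma AE_pcount_infinite_nested_cells:
  assumes C: "C \<in> sets borel" and Q: "\<And>n. Q n \<in> range (cell n)" "\<And>n. Q (Suc n) \<subseteq> Q n"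
    and void: "\<And>n. void_prob (C \<inter> Q n) = 0"
  shows "AE \<omega> in M. pcount N X C \<omega> = \<infinity>"
proof -
  have [measurable]: "Q m \<in> sets borel" for m using Q(1)[of m] by auto
  obtain t where t: "(\<Inter>m. Q m) \<subseteq> {t}" using nested_cells_Inter_subset_singleton[OF Q(1)] .
  have "AE \<omega> in M. \<forall>n. \<omega> \<notin> void_event (C \<inter> Q n)"
    unfolding AE_all_countable using void C by (auto simp: void_prob_eq_0_iff)
  then show ?thesis
    using AE_void_event_singleton[of t]
  proof eventually_elim
    case (elim \<omega>)
    then have "(C \<inter> rset N X \<omega>) \<inter> Q n \<noteq> {}" for n by (auto simp: void_event_def)
    moreover have "(C \<inter> rset N X \<omega>) \<inter> (\<Inter>n. Q n) = {}" using elim t by (auto simp: void_event_def)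
    ultimately have "infinite (C \<inter> rset N X \<omega>)"
      using finite_Int_decseq_Inter decseq_SucI[of Q] Q(2) by blast
    then show ?case by (simp add: pcount_def Int_commute)
  qed
qed

lemma poisson_enat_pcount_heavy:
  assumes C: "C \<in> sets borel" and "0 < \<epsilon>" and heavy: "\<And>n. \<exists>t. void_prob (C \<inter> cell n t) \<le> 1 - \<epsilon>"
  shows "poisson_enat M (pcount N X C) \<infinity>"
proof -
  have "void_prob (C \<inter> cell n t) \<le> 1 - \<epsilon>" if "m \<ge> n" "void_prob (C \<inter> cell m t) \<le> 1 - \<epsilon>" for m n t
  proof -
    have "void_prob (C \<inter> cell n t) \<le> void_prob (C \<inter> cell m t)"
      using C cell_antimono[OF that(1)] by (intro void_prob_antimono) auto
    then show ?thesis using that(2) by simp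
  qed
  then obtain Q where Q: "\<And>n. Q n \<in> range (cell n)" "\<And>n. Q (Suc n) \<subseteq> Q n"
    and Q_heavy: "\<And>n. void_prob (C \<inter> Q n) \<le> 1 - \<epsilon>"
    using ex_nested_cells[of "\<lambda>Q. void_prob (C \<inter> Q) \<le> 1 - \<epsilon>"] heavy by metis
  have "void_prob (C \<inter> Q n) = 0" for n
    using C Q Q_heavy \<open>0 < \<epsilon>\<close> by (rule void_prob_nested_cells_eq_0)
  then show ?thesis
    using AE_pcount_infinite_nested_cells[OF C Q] by (simp add: poisson_enat_def)
qed

lemma eventually_light_cells:
  assumes C: "C \<in> sets borel"
    and light: "\<And>\<epsilon>. 0 < \<epsilon> \<Longrightarrow> \<exists>n. \<forall>t. 1 - \<epsilon> < void_prob (C \<inter> cell n t)" and "0 < \<epsilon>"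
  shows "\<forall>\<^sub>F n in sequentially. \<forall>Q\<in>range (cell n). 1 - void_prob (C \<inter> Q) < \<epsilon>"
proof -
  obtain n0 where n0: "\<And>t. 1 - \<epsilon> < void_prob (C \<inter> cell n0 t)" using light[OF \<open>0 < \<epsilon>\<close>] by blast
  have "1 - \<epsilon> < void_prob (C \<inter> cell n t)" if "n0 \<le> n" for n t
  proof -
    have "void_prob (C \<inter> cell n0 t) \<le> void_prob (C \<inter> cell n t)"
      using C cell_antimono[OF that] by (intro void_prob_antimono) auto
    then show ?thesis using n0[of t] by simp
  qed
  then have "\<forall>n\<ge>n0. \<forall>Q\<in>range (cell n). 1 - void_prob (C \<inter> Q) < \<epsilon>"
    by (simp add: algebra_simps)
  then show ?thesis unfolding eventually_sequentially by blast
qed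

lemma void_prob_pos_light:
  assumes C: "C \<in> sets borel"
    and light: "\<And>\<epsilon>. 0 < \<epsilon> \<Longrightarrow> \<exists>n. \<forall>t. 1 - \<epsilon> < void_prob (C \<inter> cell n t)"
  shows "0 < void_prob C"
proof -
  obtain n where "\<And>t. 0 < void_prob (C \<inter> cell n t)" using light[of 1] by auto
  then show ?thesis unfolding void_prob_cells[OF C, of n] by (auto intro!: prod_pos)
qed

lemma void_prob_cell_pos:
  assumes C: "C \<in> sets borel" and "0 < void_prob C" and "Q \<in> range (cell n)"
  shows "0 < void_prob (C \<inter> Q)"
proof (rule ccontr)
  assume "\<not> ?thesis"
  then have "void_prob (C \<inter> Q) = 0" using void_prob_nonneg[of "C \<inter> Q"] by linarith
  then have "void_prob C = 0"
    unfolding void_prob_cells[OF C, of n] using assms(3) finite_cells by (intro prod_zero) auto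
  then show False using \<open>0 < void_prob C\<close> by simp
qed

lemma sums_prob_pcount_light:
  fixes s :: real
  assumes C: "C \<in> sets borel"
    and light: "\<And>\<epsilon>. 0 < \<epsilon> \<Longrightarrow> \<exists>n. \<forall>t. 1 - \<epsilon> < void_prob (C \<inter> cell n t)"
    and s: "0 < s" "s < 1"
  shows "(\<lambda>k. prob {\<omega> \<in> space M. pcount N X C \<omega> = enat k} * s ^ k) sums void_prob C powr (1 - s)"
proof -
  have "(\<lambda>n. \<Prod>Q\<in>range (cell n). 1 - (1 - s) * (1 - void_prob (C \<inter> Q))) \<longlonglongrightarrow> void_prob C powr (1 - s)"
  proof (rule tendsto_prod_one_minus_mult)
    show "(\<Prod>Q\<in>range (cell n). 1 - (1 - void_prob (C \<inter> Q))) = void_prob C" for n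
      using void_prob_cells[OF C, of n] by simp
    show "0 \<le> 1 - void_prob (C \<inter> Q) \<and> 1 - void_prob (C \<inter> Q) < 1" if "Q \<in> range (cell n)" for n Q
      using void_prob_cell_pos[OF C void_prob_pos_light[OF C light] that] by simp
  qed (use s eventually_light_cells[OF C light] finite_cells in auto)
  moreover have "expectation (\<lambda>\<omega>. s ^ cell_count n C \<omega>) =
      (\<Prod>Q\<in>range (cell n). 1 - (1 - s) * (1 - void_prob (C \<inter> Q)))" for n
    unfolding expectation_power_cell_count[OF C] by (simp add: algebra_simps)
  ultimately have "(\<lambda>n. expectation (\<lambda>\<omega>. s ^ cell_count n C \<omega>)) \<longlonglongrightarrow> void_prob C powr (1 - s)"
    by simp
  then have "expectation (\<lambda>\<omega>. case pcount N X C \<omega> of enat k \<Rightarrow> s ^ k | \<infinity> \<Rightarrow> 0) =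
      void_prob C powr (1 - s)"
    using tendsto_expectation_power_cell_count[OF C, of s] s by (intro LIMSEQ_unique) auto
  then show ?thesis using sums_prob_enat_power[OF measurable_pcount[OF C], of s] s by simp
qed

lemma poisson_enat_pcount_light:
  assumes C: "C \<in> sets borel"
    and light: "\<And>\<epsilon>. 0 < \<epsilon> \<Longrightarrow> \<exists>n. \<forall>t. 1 - \<epsilon> < void_prob (C \<inter> cell n t)"
  shows "poisson_enat M (pcount N X C) (ennreal (- ln (void_prob C)))"
proof -
  have "0 < void_prob C" using C light by (rule void_prob_pos_light)
  define \<rho> where "\<rho> = - ln (void_prob C)"
  have "0 \<le> \<rho>" using \<open>0 < void_prob C\<close> by (simp add: \<rho>_def)
  define a where "a k = prob {\<omega> \<in> space M. pcount N X C \<omega> = enat k}" for k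
  define b where "b k = exp (- \<rho>) * \<rho> ^ k / fact k" for k
  have "a k - b k = 0" for k
  proof (rule powser_eq_0_imp_coeffs_0[where B = 1])
    fix i
    have "0 \<le> a i" "a i \<le> 1" "0 \<le> b i" "b i \<le> 1"
      using \<open>0 \<le> \<rho>\<close> poisson_le_1 by (simp_all add: a_def b_def)
    then show "\<bar>a i - b i\<bar> \<le> 1" by (simp add: abs_le_iff)
  next
    fix s :: real assume s: "0 < s" "s < 1"
    have "void_prob C powr (1 - s) = exp (- (1 - s) * \<rho>)"
      using \<open>0 < void_prob C\<close> by (simp add: powr_def \<rho>_def algebra_simps)
    then have "(\<lambda>i. a i * s ^ i) sums exp (- (1 - s) * \<rho>)"
      using sums_prob_pcount_light[OF C light s] by (simp add: a_def)
    from sums_diff[OF this poisson_gf_sums[of \<rho> s]]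
    show "(\<lambda>i. (a i - b i) * s ^ i) sums 0" by (simp add: b_def algebra_simps)
  qed
  then show ?thesis using \<open>0 \<le> \<rho>\<close> by (simp add: poisson_enat_def a_def b_def \<rho>_def)
qed

lemma poisson_enat_pcount:
  assumes "C \<in> sets borel"
  shows "\<exists>\<mu>. poisson_enat M (pcount N X C) \<mu>"
proof (cases "\<exists>\<epsilon>>0. \<forall>n. \<exists>t. void_prob (C \<inter> cell n t) \<le> 1 - \<epsilon>")
  case True
  then show ?thesis using poisson_enat_pcount_heavy[OF assms] by blast
next
  case False
  then have "\<exists>n. \<forall>t. 1 - \<epsilon> < void_prob (C \<inter> cell n t)" if "0 < \<epsilon>" for \<epsilon>
    using that by (auto simp: not_le)
  then show ?thesis using poisson_enat_pcount_light[OF assms] by blast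
qed

text \<open>Every count being Poisson, \<open>z D = exp (- E count\<^sub>D)\<close>; and the expected count is additive
  in \<open>D\<close>.\<close>
lemma void_prob_Un:
  assumes [measurable]: "D1 \<in> sets borel" "D2 \<in> sets borel" and "D1 \<inter> D2 = {}"
  shows "void_prob (D1 \<union> D2) = void_prob D1 * void_prob D2"
proof -
  define mean where "mean D = (\<integral>\<^sup>+\<omega>. ennreal_of_enat (pcount N X D \<omega>) \<partial>M)" for D
  have void_mean: "void_prob D = (if mean D = \<infinity> then 0 else exp (- enn2real (mean D)))"
    if D: "D \<in> sets borel" for D
  proof -
    obtain \<mu> where \<mu>: "poisson_enat M (pcount N X D) \<mu>" using poisson_enat_pcount[OF D] by blast
    then have "mean D = \<mu>" unfolding mean_def by (rule nn_integral_poisson_enat[OF measurable_pcount[OF D]])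
    then show ?thesis
      using prob_eq_0_poisson_enat[OF measurable_pcount[OF D] \<mu>]
      by (simp add: void_prob_def void_event_eq_pcount_0)
  qed
  have [measurable]: "ennreal_of_enat \<in> measurable (count_space UNIV) borel" by simp
  have "mean (D1 \<union> D2) = mean D1 + mean D2"
    unfolding mean_def pcount_Un[OF assms(3)] ennreal_of_enat_plus by (rule nn_integral_add) auto
  then show ?thesis
    using void_mean[of D1] void_mean[of D2] void_mean[of "D1 \<union> D2"]
    by (auto simp: enn2real_plus exp_add[symmetric] less_top[symmetric])
qed

lemma void_prob_UN:
  assumes "finite I" and "\<And>i. i \<in> I \<Longrightarrow> D i \<in> sets borel" and "disjoint_family_on D I"
  shows "void_prob (\<Union>i\<in>I. D i) = (\<Prod>i\<in>I. void_prob (D i))"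
proof (rule multiplicative_UN[where f = void_prob, OF \<open>finite I\<close> void_prob_empty])
  fix i J assume "finite J" "J \<subseteq> I" "i \<in> I" "i \<notin> J"
  moreover have "D i \<inter> (\<Union>j\<in>J. D j) = {}"
    using assms(3) \<open>J \<subseteq> I\<close> \<open>i \<in> I\<close> \<open>i \<notin> J\<close> by (fastforce simp: disjoint_family_on_def)
  ultimately show "void_prob (D i \<union> (\<Union>j\<in>J. D j)) = void_prob (D i) * void_prob (\<Union>j\<in>J. D j)"
    using assms(2) \<open>finite J\<close> \<open>J \<subseteq> I\<close> \<open>i \<in> I\<close> by (intro void_prob_Un sets.finite_UN) auto
qed

lemma indep_sets_void_events:
  assumes "disjoint_family_on B I"
  shows "indep_sets (\<lambda>i. void_event ` {D \<in> sets borel. D \<subseteq> B i}) I"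
proof (rule indep_setsI)
  show "void_event ` {D \<in> sets borel. D \<subseteq> B i} \<subseteq> events" for i by auto
  fix A J assume J: "J \<noteq> {}" "J \<subseteq> I" "finite J"
    and A: "\<forall>j\<in>J. A j \<in> void_event ` {D \<in> sets borel. D \<subseteq> B j}"
  then have "\<forall>j\<in>J. \<exists>D. A j = void_event D \<and> D \<in> sets borel \<and> D \<subseteq> B j"
    by (auto simp: image_iff)
  from bchoice[OF this] obtain D
    where D: "\<forall>j\<in>J. A j = void_event (D j) \<and> D j \<in> sets borel \<and> D j \<subseteq> B j"
    by blast
  have "disjoint_family_on D J"
    unfolding disjoint_family_on_def
  proof (intro ballI impI)
    fix m n assume "m \<in> J" "n \<in> J" "m \<noteq> n"
    then have "B m \<inter> B n = {}" using assms J(2) by (auto simp: disjoint_family_on_def)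
    then show "D m \<inter> D n = {}" using D \<open>m \<in> J\<close> \<open>n \<in> J\<close> by blast
  qed
  have "(\<Inter>j\<in>J. A j) = (\<Inter>j\<in>J. void_event (D j))"
    by (rule INF_cong[OF refl]) (use D in blast)
  also have "\<dots> = void_event (\<Union>j\<in>J. D j)" by (rule void_event_UN[symmetric, OF J(1)])
  finally have "prob (\<Inter>j\<in>J. A j) = void_prob (\<Union>j\<in>J. D j)" by (simp add: void_prob_def)
  also have "\<dots> = (\<Prod>j\<in>J. void_prob (D j))"
    using J(3) D \<open>disjoint_family_on D J\<close> by (intro void_prob_UN) auto
  also have "\<dots> = (\<Prod>j\<in>J. prob (A j))"
    using D by (intro prod.cong) (auto simp: void_prob_def)
  finally show "prob (\<Inter>j\<in>J. A j) = (\<Prod>j\<in>J. prob (A j))" .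
qed

lemma Int_stable_void_events: "Int_stable (void_event ` {D \<in> sets borel. D \<subseteq> B})"
proof (rule Int_stableI)
  fix a b assume "a \<in> void_event ` {D \<in> sets borel. D \<subseteq> B}" "b \<in> void_event ` {D \<in> sets borel. D \<subseteq> B}"
  then obtain Da Db where "a = void_event Da" "Da \<in> sets borel" "Da \<subseteq> B"
    "b = void_event Db" "Db \<in> sets borel" "Db \<subseteq> B"
    by blast
  then show "a \<inter> b \<in> void_event ` {D \<in> sets borel. D \<subseteq> B}"
    by (auto simp: void_event_Un[symmetric])
qed

text \<open>Each count is measurable with respect to the \<open>\<sigma>\<close>-algebra generated by the void events inside
  its set, and these \<open>\<sigma>\<close>-algebras are independent by the \<open>\<pi>\<close>-\<open>\<lambda>\<close> theorem.\<close>
lemma indep_vars_pcount: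
  assumes B: "\<And>i. i \<in> I \<Longrightarrow> B i \<in> sets borel" and "disjoint_family_on B I"
  shows "indep_vars (\<lambda>_. count_space UNIV) (\<lambda>i. pcount N X (B i)) I"
proof -
  define F where "F i = void_event ` {D \<in> sets borel. D \<subseteq> B i}" for i
  have F_Pow: "F i \<subseteq> Pow (space M)" for i
    unfolding F_def void_event_def by auto
  have indep_sigma: "indep_sets (\<lambda>i. sigma_sets (space M) (F i)) I"
    unfolding F_def using indep_sets_void_events[OF assms(2)] Int_stable_void_events
    by (rule indep_sets_sigma)
  have "{pcount N X (B i) -` A \<inter> space M |A. A \<in> sets (count_space UNIV)} \<subseteq>
      sigma_sets (space M) (F i)" if "i \<in> I" for i
  proof -
    have "pcount N X (B i) \<in> measurable (sigma (space M) (F i)) (count_space UNIV)"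
    proof (rule measurable_pcount_subalgebra)
      show "space (sigma (space M) (F i)) = space M" by (rule space_measure_of[OF F_Pow])
      show "void_event (B i \<inter> cell n t) \<in> sets (sigma (space M) (F i))" for n t
        unfolding sets_measure_of[OF F_Pow] using B[OF that] by (intro sigma_sets.Basic) (auto simp: F_def)
    qed
    from measurable_sets[OF this] show ?thesis
      by (auto simp: space_measure_of[OF F_Pow] sets_measure_of[OF F_Pow])
  qed
  then show ?thesis
    unfolding indep_vars_def2 using B by (auto intro: indep_sets_mono_sets[OF indep_sigma])
qed

end

theorem lemma9p5:
  fixes M :: "('w::polish_space) measure"
    and N :: "'w \<Rightarrow> enat"
    and X :: "nat \<Rightarrow> 'w \<Rightarrow> 't::polish_space"
    and \<A> :: "'t set set"
  assumes "standard_prob_space M"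
    and "random_countable_set M N X"
    and "algebra UNIV \<A>"
    and "\<A> \<subseteq> sets (borel :: 't measure)"
    and "sigma_sets UNIV \<A> = sets (borel :: 't measure)"
    and "independence_condition M N X \<A>"
    and "\<And>t. measure M {\<omega> \<in> space M. t \<in> rset N X \<omega>} = 0"
  shows "kingman_poisson M N X"
proof -
  have "prob_space M" using assms(1) by (rule standard_prob_space_imp_prob_space)
  then have "indep_random_set M N X \<A>"
    using assms(2-7) unfolding random_countable_set_def
    by (intro indep_random_set.intro indep_random_set_axioms.intro) auto
  moreover obtain G :: "nat \<Rightarrow> 't set"
    where "range G \<subseteq> \<A>" "\<And>s t. s \<noteq> t \<Longrightarrow> \<exists>i. (s \<in> G i) \<noteq> (t \<in> G i)"
    using ex_separating_seq[OF _ assms(5)] algebra.top[OF assms(3)] by blast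
  ultimately interpret dissected_random_set M N X \<A> "\<lambda>n t. {s. \<forall>i<n. s \<in> G i \<longleftrightarrow> t \<in> G i}"
    using assms(3) by (intro dissected_random_set.intro dissecting_system_of_separating_seq)
  show ?thesis
    unfolding kingman_poisson_def
    by (intro conjI ballI allI impI measurable_pcount poisson_enat_pcount indep_vars_pcount) auto
qed

end
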